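(* Let $K\subset\mathbb{R}^n$ be a convex body and $1\leq i\leq n$. Then $\widetilde{\mathrm{r}}_i(K)\leq i\,\mathrm{r}_i(K)$. For $i=1$ the inequality is best possible (equality is attained).
   Context: A convex body is a compact convex subset of $\mathbb{R}^n$. $\mathcal{L}^n_i$ is the set of $i$-dimensional linear subspaces, $K|L$ the orthogonal projection onto $L$, $L^\perp$ the orthogonal complement; for a set $C$ contained in an affine subspace $A$, $\mathrm{r}(C;A)$ denotes the Euclidean inradius of $C$ measured within $A$. Define $\mathrm{r}_i(K)=\max_{L\in\mathcal{L}^n_i}\max_{x\in L^\perp}\mathrm{r}(K\cap(x+L);x+L)$ and $\widetilde{\mathrm{r}}_i(K)=\max_{L\in\mathcal{L}^n_i}\mathrm{r}(K|L;L)$. *)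

theory Defs
  imports "HOL-Analysis.Analysis"
begin

definition convex_body :: "'a::euclidean_space set \<Rightarrow> bool" where
  "convex_body K \<longleftrightarrow> compact K \<and> convex K \<and> K \<noteq> {}"

definition inradius_in :: "'a::euclidean_space set \<Rightarrow> 'a set \<Rightarrow> real" where
  "inradius_in C A = Sup {r. r \<ge> 0 \<and> (\<exists>x\<in>A. cball x r \<inter> A \<subseteq> C)}"

definition orth_proj_set :: "'a::euclidean_space set \<Rightarrow> 'a set \<Rightarrow> 'a set" where
  "orth_proj_set K L = {y \<in> L. \<exists>k\<in>K. k - y \<in> orthogonal_comp L}"

text \<open>r_i(K): maximal inradius of i-dimensional sections (nonempty ones).\<close>
definition sect_inradius :: "nat \<Rightarrow> 'a::euclidean_space set \<Rightarrow> real" where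
  "sect_inradius i K = Sup {inradius_in (K \<inter> ((+) x ` L)) ((+) x ` L) | L x.
      subspace L \<and> dim L = i \<and> x \<in> orthogonal_comp L \<and> K \<inter> ((+) x ` L) \<noteq> {}}"

text \<open>tilde r_i(K): maximal inradius of i-dimensional projections.\<close>
definition proj_inradius :: "nat \<Rightarrow> 'a::euclidean_space set \<Rightarrow> real" where
  "proj_inradius i K = Sup {inradius_in (orth_proj_set K L) L | L.
      subspace L \<and> dim L = i}"

end

theory Submission
  imports Defs
begin

text \<open>
  Let the projection \<open>K|L\<close> contain an \<open>i\<close>-ball of radius \<open>r\<close> centred at \<open>c\<close>. Inscribe in it a
  regular simplex with vertices \<open>c + t u\<^sub>k\<close> (\<open>k = 0, \<dots>, i\<close>), where the \<open>u\<^sub>k\<close> sum to zero and form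
  a tight frame of \<open>L\<close>, and lift each vertex to a point \<open>p\<^sub>k \<in> K\<close>. The linear map
  \<open>w \<mapsto> \<Sum>\<^sub>k (w \<bullet> u\<^sub>k / t) p\<^sub>k\<close> differs from the identity on \<open>L\<close> by a vector orthogonal to \<open>L\<close>, so it
  does not shrink lengths and maps \<open>L\<close> onto an \<open>i\<close>-dimensional subspace \<open>L'\<close>. Hence the simplex
  spanned by the \<open>p\<^sub>k\<close>, which lies in \<open>K\<close> and in a translate of \<open>L'\<close>, contains a ball of radius
  at least the inradius \<open>r / i\<close> of the regular simplex below it. Conversely every section ball
  projects onto a ball of the same radius, which gives equality for \<open>i = 1\<close>.
\<close>

lemma orthogonal_decomposition_subspace:
  fixes x :: "'a::euclidean_space"
  assumes "subspace L"
  obtains y z where "y \<in> L" "z \<in> orthogonal_comp L" "x = y + z"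
proof -
  obtain y z where "y \<in> span L" "\<And>w. w \<in> span L \<Longrightarrow> orthogonal z w" "x = y + z"
    using orthogonal_subspace_decomp_exists by metis
  moreover have "span L = L" using assms by simp
  ultimately show thesis
    by (intro that[of y z]) (auto simp: orthogonal_comp_def orthogonal_commute)
qed

lemma norm_le_norm_add_orthogonal_comp:
  fixes w :: "'a::euclidean_space"
  assumes "w \<in> L" "v \<in> orthogonal_comp L"
  shows "norm w \<le> norm (w + v)"
proof -
  have "orthogonal w v" using assms by (auto simp: orthogonal_comp_def)
  then have "(norm (w + v))\<^sup>2 = (norm w)\<^sup>2 + (norm v)\<^sup>2" by (rule norm_add_Pythagorean)
  then have "(norm w)\<^sup>2 \<le> (norm (w + v))\<^sup>2" by simp
  then show ?thesis by (rule power2_le_imp_le) simp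
qed

lemma obtain_subspace_dim:
  assumes "i \<le> DIM('a)"
  obtains L :: "'a::euclidean_space set" where "subspace L" "dim L = i"
  using choose_subspace_of_subspace[of i "UNIV :: 'a set"] assms by auto

lemma convex_body_subset_cball:
  assumes "convex_body K"
  obtains M where "K \<subseteq> cball 0 M"
proof -
  have "bounded K" using assms by (simp add: convex_body_def compact_imp_bounded)
  then obtain M where "\<forall>x\<in>K. norm x \<le> M" by (auto simp: bounded_iff)
  then show thesis by (intro that[of M]) auto
qed

lemma orth_proj_set_memI:
  assumes "y \<in> L" "k \<in> K" "k - y \<in> orthogonal_comp L"
  shows "y \<in> orth_proj_set K L"
  using assms by (auto simp: orth_proj_set_def)

lemma orth_proj_set_nonempty:
  fixes K :: "'a::euclidean_space set"
  assumes "subspace L" "K \<noteq> {}"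
  shows "orth_proj_set K L \<noteq> {}"
proof -
  obtain k where k: "k \<in> K" using assms by auto
  obtain y z where "y \<in> L" "z \<in> orthogonal_comp L" "k = y + z"
    using orthogonal_decomposition_subspace[OF assms(1)] by metis
  then show ?thesis using k orth_proj_set_memI[of y L k K] by auto
qed

lemma orth_proj_set_subset_cball:
  fixes K :: "'a::euclidean_space set"
  assumes "K \<subseteq> cball 0 M"
  shows "orth_proj_set K L \<subseteq> cball 0 M"
proof
  fix y assume "y \<in> orth_proj_set K L"
  then obtain k where y: "y \<in> L" "k \<in> K" "k - y \<in> orthogonal_comp L"
    by (auto simp: orth_proj_set_def)
  then have "norm y \<le> norm k"
    using norm_le_norm_add_orthogonal_comp[of y L "k - y"] by simp
  then show "y \<in> cball 0 M" using y assms by auto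
qed

lemma inradius_radius_le_diameter:
  fixes C :: "'a::euclidean_space set"
  assumes "C \<subseteq> cball 0 M" "subspace L" "L \<noteq> {0}"
    and x: "x \<in> (+) a ` L" and ball: "cball x r \<inter> (+) a ` L \<subseteq> C" and "0 \<le> r"
  shows "r \<le> 2 * M"
proof -
  obtain v where v: "v \<in> L" "v \<noteq> 0" using assms(2,3) subspace_0 by blast
  define e where "e = v /\<^sub>R norm v"
  have e: "e \<in> L" "norm e = 1" using v assms(2) by (simp_all add: e_def subspace_scale)
  obtain l where l: "l \<in> L" "x = a + l" using x by auto
  have "x + r *\<^sub>R e = a + (l + r *\<^sub>R e)" using l by (simp add: algebra_simps)
  then have "x + r *\<^sub>R e \<in> (+) a ` L" using l e assms(2) by (auto simp: subspace_add subspace_scale)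
  then have "x + r *\<^sub>R e \<in> C" "x \<in> C" using ball x e \<open>0 \<le> r\<close> by (auto simp: dist_norm)
  then have "norm (x + r *\<^sub>R e) \<le> M" "norm x \<le> M" using assms(1) by auto
  moreover have "norm (r *\<^sub>R e) \<le> norm (x + r *\<^sub>R e) + norm x"
    using norm_triangle_ineq4[of "x + r *\<^sub>R e" x] by simp
  ultimately show ?thesis using e \<open>0 \<le> r\<close> by simp
qed

lemma inradius_in_le:
  assumes "x0 \<in> C \<inter> A"
    and "\<And>r x. 0 \<le> r \<Longrightarrow> x \<in> A \<Longrightarrow> cball x r \<inter> A \<subseteq> C \<Longrightarrow> r \<le> s"
  shows "inradius_in C A \<le> s"
  unfolding inradius_in_def
proof (rule cSup_least)
  show "{r. 0 \<le> r \<and> (\<exists>x\<in>A. cball x r \<inter> A \<subseteq> C)} \<noteq> {}"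
    using assms(1) by (auto intro!: exI[of _ 0] bexI[of _ x0])
qed (use assms(2) in blast)

lemma inradius_in_le_diameter:
  fixes C :: "'a::euclidean_space set"
  assumes "C \<subseteq> cball 0 M" "subspace L" "L \<noteq> {0}" "C \<inter> (+) a ` L \<noteq> {}"
  shows "inradius_in C ((+) a ` L) \<le> 2 * M"
  using assms inradius_radius_le_diameter[OF assms(1-3)]
  by (metis equals0I inradius_in_le)

lemma inradius_in_ge:
  fixes C :: "'a::euclidean_space set"
  assumes "C \<subseteq> cball 0 M" "subspace L" "L \<noteq> {0}"
    and "x \<in> (+) a ` L" "cball x r \<inter> (+) a ` L \<subseteq> C" "0 \<le> r"
  shows "r \<le> inradius_in C ((+) a ` L)"
  unfolding inradius_in_def
proof (rule cSup_upper)
  show "bdd_above {r. 0 \<le> r \<and> (\<exists>x\<in>(+) a ` L. cball x r \<inter> (+) a ` L \<subseteq> C)}"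
    using inradius_radius_le_diameter[OF assms(1-3)] by (intro bdd_aboveI[of _ "2 * M"]) blast
qed (use assms(4-6) in blast)

lemma inradius_in_le_sect_inradius:
  fixes K :: "'a::euclidean_space set"
  assumes "K \<subseteq> cball 0 M" "1 \<le> i" "subspace L" "dim L = i"
    and "x \<in> orthogonal_comp L" "K \<inter> (+) x ` L \<noteq> {}"
  shows "inradius_in (K \<inter> (+) x ` L) ((+) x ` L) \<le> sect_inradius i K"
  unfolding sect_inradius_def
proof (rule cSup_upper)
  show "bdd_above {inradius_in (K \<inter> (+) x ` L) ((+) x ` L) |L x.
        subspace L \<and> dim L = i \<and> x \<in> orthogonal_comp L \<and> K \<inter> (+) x ` L \<noteq> {}}"
    using assms(1,2)
    by (intro bdd_aboveI[of _ "2 * M"]) (auto intro!: inradius_in_le_diameter)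
qed (use assms(3-6) in blast)

lemma inradius_in_le_proj_inradius:
  fixes K :: "'a::euclidean_space set"
  assumes "K \<subseteq> cball 0 M" "K \<noteq> {}" "1 \<le> i" "subspace L" "dim L = i"
  shows "inradius_in (orth_proj_set K L) L \<le> proj_inradius i K"
  unfolding proj_inradius_def
proof (rule cSup_upper)
  show "bdd_above {inradius_in (orth_proj_set K L) L | L. subspace L \<and> dim L = i}"
  proof (rule bdd_aboveI)
    fix e assume "e \<in> {inradius_in (orth_proj_set K L) L | L. subspace L \<and> dim L = i}"
    then obtain L' where L': "e = inradius_in (orth_proj_set K L') L'" "subspace L'" "dim L' = i"
      by blast
    moreover have "orth_proj_set K L' \<noteq> {}" "orth_proj_set K L' \<subseteq> L'"
      using orth_proj_set_nonempty[OF L'(2) assms(2)] by (auto simp: orth_proj_set_def)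
    ultimately have "L' \<noteq> {0}" "orth_proj_set K L' \<inter> (+) 0 ` L' \<noteq> {}"
      using assms(3) by auto
    then show "e \<le> 2 * M"
      using inradius_in_le_diameter[of "orth_proj_set K L'" M L' 0]
        orth_proj_set_subset_cball[OF assms(1), of L'] L' by simp
  qed
qed (use assms(4,5) in blast)

lemma inner_sum_orthonormal:
  fixes B :: "'a::euclidean_space set"
  assumes "finite B" "pairwise orthogonal B" "\<And>b. b \<in> B \<Longrightarrow> norm b = 1" "b \<in> B"
  shows "b \<bullet> \<Sum>B = 1"
proof -
  have "b \<bullet> \<Sum>B = (\<Sum>v\<in>B. b \<bullet> v)" by (simp add: inner_sum_right)
  also have "\<dots> = b \<bullet> b + (\<Sum>v\<in>B - {b}. b \<bullet> v)"
    using assms(1,4) by (simp add: sum.remove)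
  also have "(\<Sum>v\<in>B - {b}. b \<bullet> v) = 0"
    using assms(2,4) by (intro sum.neutral) (auto simp: pairwise_def orthogonal_def)
  finally show ?thesis using assms(3,4) by (simp add: norm_eq_1)
qed

lemma orthonormal_shifted_expand:
  fixes B :: "'a::euclidean_space set" and \<mu> :: real
  assumes "finite B" "pairwise orthogonal B" "\<And>b. b \<in> B \<Longrightarrow> norm b = 1" "w \<in> span B"
  defines "S \<equiv> \<Sum>B"
  shows "(\<Sum>b\<in>B. (w \<bullet> (b - \<mu> *\<^sub>R S)) *\<^sub>R (b - \<mu> *\<^sub>R S))
         = w + ((card B * \<mu>\<^sup>2 - 2 * \<mu>) * (w \<bullet> S)) *\<^sub>R S"
proof -
  have rank_one: "(w \<bullet> (b - \<mu> *\<^sub>R S)) *\<^sub>R (b - \<mu> *\<^sub>R S)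
      = (w \<bullet> b) *\<^sub>R b - (\<mu> * (w \<bullet> b)) *\<^sub>R S - (\<mu> * (w \<bullet> S)) *\<^sub>R b + (\<mu>\<^sup>2 * (w \<bullet> S)) *\<^sub>R S" for b
    by (simp add: inner_diff_right algebra_simps power2_eq_square)
  have "(\<Sum>b\<in>B. (\<mu> * (w \<bullet> b)) *\<^sub>R S) = (\<mu> * (w \<bullet> S)) *\<^sub>R S"
    by (simp add: S_def scaleR_sum_left[symmetric] sum_distrib_left[symmetric] inner_sum_right)
  moreover have "(\<Sum>b\<in>B. (\<mu> * (w \<bullet> S)) *\<^sub>R b) = (\<mu> * (w \<bullet> S)) *\<^sub>R S"
    by (simp add: S_def scaleR_sum_right)
  moreover have "(\<Sum>b\<in>B. (\<mu>\<^sup>2 * (w \<bullet> S)) *\<^sub>R S) = (card B * \<mu>\<^sup>2 * (w \<bullet> S)) *\<^sub>R S"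
    by (simp add: sum_constant_scaleR)
  ultimately have "(\<Sum>b\<in>B. (w \<bullet> (b - \<mu> *\<^sub>R S)) *\<^sub>R (b - \<mu> *\<^sub>R S))
      = w - (\<mu> * (w \<bullet> S)) *\<^sub>R S - (\<mu> * (w \<bullet> S)) *\<^sub>R S + (card B * \<mu>\<^sup>2 * (w \<bullet> S)) *\<^sub>R S"
    using orthonormal_basis_expand[OF assms(2,3,4,1)]
    by (simp only: rank_one sum.distrib sum_subtractf)
  also have "\<dots> = w + ((card B * \<mu>\<^sup>2 - 2 * \<mu>) * (w \<bullet> S)) *\<^sub>R S"
    by (simp add: algebra_simps flip: scaleR_add_left)
  finally show ?thesis .
qed

text \<open>
  For an orthonormal basis \<open>B\<close> of \<open>L\<close> with sum \<open>S\<close>, the vectors \<open>-s S\<close> and \<open>b - \<mu> S\<close> (\<open>b \<in> B\<close>)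
  sum to zero by the first identity and form a tight frame of \<open>L\<close> by the last one.
\<close>
lemma regular_simplex_coefficients:
  fixes n :: nat and s \<mu> :: real
  assumes n: "1 \<le> n" and s: "s = 1 / sqrt (n + 1)" and \<mu>: "\<mu> = (1 - s) / n"
  shows "n * \<mu> = 1 - s" "s\<^sup>2 = 1 / (n + 1)" "s\<^sup>2 - 2 * \<mu> + n * \<mu>\<^sup>2 = 0"
proof -
  have npos: "real n > 0" using n by simp
  show nmu: "n * \<mu> = 1 - s" using npos by (simp add: \<mu>)
  show s2: "s\<^sup>2 = 1 / (n + 1)" by (simp add: s power_divide)
  have "n * (s\<^sup>2 - 2 * \<mu> + n * \<mu>\<^sup>2) = n * s\<^sup>2 - 2 * (n * \<mu>) + (n * \<mu>)\<^sup>2"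
    by (simp add: power2_eq_square algebra_simps)
  also have "\<dots> = n * s\<^sup>2 - 2 * (1 - s) + (1 - s)\<^sup>2" by (simp only: nmu)
  also have "\<dots> = (n + 1) * s\<^sup>2 - 1" by (simp add: power2_eq_square algebra_simps)
  also have "\<dots> = 0" by (simp add: s2)
  finally show "s\<^sup>2 - 2 * \<mu> + n * \<mu>\<^sup>2 = 0" using npos by simp
qed

lemma regular_simplex_tight_frame:
  fixes L :: "'a::euclidean_space set"
  assumes L: "subspace L" and n: "dim L = n" "1 \<le> n"
  obtains I :: "'a option set" and u
  where "finite I" "card I = n + 1" "\<And>k. k \<in> I \<Longrightarrow> u k \<in> L" "(\<Sum>k\<in>I. u k) = 0"
    "\<And>w. w \<in> L \<Longrightarrow> (\<Sum>k\<in>I. (w \<bullet> u k) *\<^sub>R u k) = w"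
    "\<And>k. k \<in> I \<Longrightarrow> (norm (u k))\<^sup>2 = real n / (real n + 1)"
proof -
  obtain B where BL: "B \<subseteq> L" and orth: "pairwise orthogonal B"
    and B1: "\<And>x. x \<in> B \<Longrightarrow> norm x = 1" and indB: "independent B" and cB: "card B = n"
    and spB: "span B = L"
    using orthonormal_basis_subspace[OF L] n(1) by metis
  have fin: "finite B" using indB by (rule independent_imp_finite)
  define S where "S = \<Sum>B"
  define s :: real where "s = 1 / sqrt (n + 1)"
  define \<mu> where "\<mu> = (1 - s) / n"
  have npos: "real n > 0" using n(2) by simp
  have nmu: "n * \<mu> = 1 - s" and s2: "s\<^sup>2 = 1 / (n + 1)" and frame_coeff: "s\<^sup>2 - 2 * \<mu> + n * \<mu>\<^sup>2 = 0"
    using regular_simplex_coefficients[OF n(2) s_def \<mu>_def] by simp_all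
  have SL: "S \<in> L" unfolding S_def using BL L by (intro subspace_sum) auto
  have bS: "b \<bullet> S = 1" if "b \<in> B" for b
    unfolding S_def using fin orth B1 that by (rule inner_sum_orthonormal)
  have "S \<bullet> S = (\<Sum>b\<in>B. b \<bullet> S)" by (simp add: S_def inner_sum_left)
  then have SS: "S \<bullet> S = n" using bS cB by simp
  define I where "I = insert None (Some ` B)"
  define u where "u = case_option ((- s) *\<^sub>R S) (\<lambda>b. b - \<mu> *\<^sub>R S)"
  have sum_I: "sum f I = f None + (\<Sum>b\<in>B. f (Some b))" for f :: "'a option \<Rightarrow> 'c::comm_monoid_add"
    using fin by (simp add: I_def sum.reindex)
  show thesis
  proof
    show "finite I" "card I = n + 1"
      using fin cB by (simp_all add: I_def card_image)
    show "u k \<in> L" if "k \<in> I" for k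
      using that SL BL L by (auto simp: I_def u_def subspace_scale subspace_diff subspace_neg)
    have "(\<Sum>k\<in>I. u k) = (1 - s - n * \<mu>) *\<^sub>R S"
      using cB by (simp add: sum_I u_def sum_subtractf S_def[symmetric] sum_constant_scaleR algebra_simps)
    then show "(\<Sum>k\<in>I. u k) = 0" using nmu by simp
    show "(\<Sum>k\<in>I. (w \<bullet> u k) *\<^sub>R u k) = w" if "w \<in> L" for w
    proof -
      have "(\<Sum>k\<in>I. (w \<bullet> u k) *\<^sub>R u k)
          = (s\<^sup>2 * (w \<bullet> S)) *\<^sub>R S + w + ((n * \<mu>\<^sup>2 - 2 * \<mu>) * (w \<bullet> S)) *\<^sub>R S"
        using orthonormal_shifted_expand[OF fin orth B1, of w \<mu>] that spB cB
        by (simp add: sum_I u_def S_def power2_eq_square)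
      also have "\<dots> = w + ((s\<^sup>2 - 2 * \<mu> + n * \<mu>\<^sup>2) * (w \<bullet> S)) *\<^sub>R S"
        by (simp add: algebra_simps flip: scaleR_add_left)
      finally show ?thesis by (simp add: frame_coeff)
    qed
    show "(norm (u k))\<^sup>2 = real n / (real n + 1)" if "k \<in> I" for k
    proof (cases k)
      case None
      then have "(norm (u k))\<^sup>2 = s\<^sup>2 * n"
        by (simp only: u_def option.case power2_norm_eq_inner) (simp add: SS power2_eq_square)
      then show ?thesis by (simp add: s2)
    next
      case (Some b)
      then have b: "b \<in> B" using that by (auto simp: I_def)
      have "(norm (u k))\<^sup>2 = b \<bullet> b - 2 * \<mu> * (b \<bullet> S) + \<mu>\<^sup>2 * (S \<bullet> S)"
        using Some unfolding u_def option.case power2_norm_eq_inner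
        by (simp add: inner_diff_left inner_diff_right inner_commute power2_eq_square algebra_simps)
      also have "\<dots> = 1 - s\<^sup>2"
        using B1[OF b] bS[OF b] SS frame_coeff by (simp add: norm_eq_1 algebra_simps)
      finally show ?thesis using npos by (simp add: s2 field_simps)
    qed
  qed
qed

lemma convex_perturbed_barycentre_mem:
  fixes K :: "'a::real_vector set"
  assumes "convex K" "finite I" "I \<noteq> {}" "\<And>k. k \<in> I \<Longrightarrow> p k \<in> K"
    and "(\<Sum>k\<in>I. a k) = 0" "\<And>k. k \<in> I \<Longrightarrow> \<bar>a k\<bar> \<le> 1 / card I"
  shows "(\<Sum>k\<in>I. (1 / card I + a k) *\<^sub>R p k) \<in> K"
proof (rule convex_sum[OF assms(2,1)])
  show "(\<Sum>k\<in>I. 1 / card I + a k) = 1"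
    using assms(2,3,5) by (simp add: sum.distrib)
  show "0 \<le> 1 / card I + a k" if "k \<in> I" for k
    using assms(6)[OF that] by linarith
qed (use assms(4) in auto)

lemma frame_lift_minus_mem_orthogonal_comp:
  fixes u p :: "'b \<Rightarrow> 'a::euclidean_space"
  assumes "t \<noteq> 0" "(\<Sum>k\<in>I. u k) = 0" "(\<Sum>k\<in>I. (w \<bullet> u k) *\<^sub>R u k) = w"
    and "\<And>k. k \<in> I \<Longrightarrow> p k - (c + t *\<^sub>R u k) \<in> orthogonal_comp L"
  shows "(\<Sum>k\<in>I. ((w \<bullet> u k) / t) *\<^sub>R p k) - w \<in> orthogonal_comp L"
proof -
  have "(\<Sum>k\<in>I. ((w \<bullet> u k) / t) *\<^sub>R (c + t *\<^sub>R u k))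
      = ((w \<bullet> (\<Sum>k\<in>I. u k)) / t) *\<^sub>R c + (\<Sum>k\<in>I. (w \<bullet> u k) *\<^sub>R u k)"
    using assms(1)
    by (simp add: scaleR_add_right sum.distrib scaleR_sum_left sum_divide_distrib inner_sum_right)
  also have "\<dots> = w" using assms(2,3) by simp
  finally have "(\<Sum>k\<in>I. ((w \<bullet> u k) / t) *\<^sub>R p k) - w
      = (\<Sum>k\<in>I. ((w \<bullet> u k) / t) *\<^sub>R (p k - (c + t *\<^sub>R u k)))"
    by (simp only: scaleR_diff_right sum_subtractf)
  also have "\<dots> \<in> orthogonal_comp L"
    by (intro subspace_sum[OF subspace_orthogonal_comp] subspace_scale[OF subspace_orthogonal_comp]
        assms(4))
  finally show ?thesis .
qed

lemma dim_image_orthogonal_perturbation: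
  fixes G :: "'a::euclidean_space \<Rightarrow> 'a"
  assumes "linear G" "subspace L" "\<And>w. w \<in> L \<Longrightarrow> G w - w \<in> orthogonal_comp L"
  shows "dim (G ` L) = dim L"
proof (rule dim_image_eq[OF assms(1)])
  have "inj_on G L"
  proof (rule inj_onI)
    fix x y assume "x \<in> L" "y \<in> L" "G x = G y"
    then have xy: "x - y \<in> L" and G0: "G (x - y) = 0"
      using assms(1,2) by (simp_all add: subspace_diff linear_diff)
    have "norm (x - y) \<le> norm (x - y + (G (x - y) - (x - y)))"
      using norm_le_norm_add_orthogonal_comp[OF xy assms(3)[OF xy]] .
    with G0 have "norm (x - y) \<le> 0" by simp
    then show "x = y" by simp
  qed
  then show "inj_on G (span L)" using assms(2) by (metis span_eq_iff)
qed

lemma section_ball_of_projection_ball_frame: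
  fixes K L :: "'a::euclidean_space set" and u :: "'b \<Rightarrow> 'a" and R :: real
  assumes K: "convex K" and L: "subspace L" and I: "finite I" "I \<noteq> {}"
    and uL: "\<And>k. k \<in> I \<Longrightarrow> u k \<in> L" and usum: "(\<Sum>k\<in>I. u k) = 0"
    and frame: "\<And>w. w \<in> L \<Longrightarrow> (\<Sum>k\<in>I. (w \<bullet> u k) *\<^sub>R u k) = w"
    and unorm: "\<And>k. k \<in> I \<Longrightarrow> norm (u k) \<le> R" and R: "R > 0" and r: "r > 0"
    and c: "c \<in> L" and ball: "cball c r \<inter> L \<subseteq> orth_proj_set K L"
  obtains L' x q where "subspace L'" "dim L' = dim L" "x \<in> orthogonal_comp L'" "q \<in> (+) x ` L'"
    "cball q (r / (card I * R\<^sup>2)) \<inter> (+) x ` L' \<subseteq> K"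
proof -
  define t where "t = r / R"
  have t: "t > 0" using r R by (simp add: t_def)
  have "\<exists>p\<in>K. p - (c + t *\<^sub>R u k) \<in> orthogonal_comp L" if k: "k \<in> I" for k
  proof -
    have "norm (t *\<^sub>R u k) \<le> r"
      using unorm[OF k] t R by (simp add: t_def field_simps)
    then have "c + t *\<^sub>R u k \<in> cball c r \<inter> L"
      using c uL[OF k] L by (simp add: dist_norm subspace_add subspace_scale)
    then show ?thesis using ball by (auto simp: orth_proj_set_def)
  qed
  then obtain p where pK: "\<And>k. k \<in> I \<Longrightarrow> p k \<in> K"
    and p_lift: "\<And>k. k \<in> I \<Longrightarrow> p k - (c + t *\<^sub>R u k) \<in> orthogonal_comp L"
    by metis
  define G where "G w = (\<Sum>k\<in>I. ((w \<bullet> u k) / t) *\<^sub>R p k)" for w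
  have G: "linear G"
    unfolding G_def
    by (intro linear_compose_sum ballI linearI) (simp_all add: inner_add_left add_divide_distrib scaleR_add_left)
  have G_perturb: "G w - w \<in> orthogonal_comp L" if "w \<in> L" for w
    unfolding G_def using t usum frame[OF that] p_lift by (intro frame_lift_minus_mem_orthogonal_comp) auto
  define L' where "L' = G ` L"
  have L': "subspace L'" "dim L' = dim L"
    unfolding L'_def using G L G_perturb by (auto intro: linear_subspace_image dim_image_orthogonal_perturbation)
  define g where "g = (\<Sum>k\<in>I. (1 / card I) *\<^sub>R p k)"
  obtain y z where yz: "y \<in> L'" "z \<in> orthogonal_comp L'" "g = y + z"
    using orthogonal_decomposition_subspace[OF L'(1)] by metis
  show thesis
  proof
    show "g \<in> (+) z ` L'" using yz by (auto simp: add.commute)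
    show "cball g (r / (card I * R\<^sup>2)) \<inter> (+) z ` L' \<subseteq> K"
    proof
      fix q assume q: "q \<in> cball g (r / (card I * R\<^sup>2)) \<inter> (+) z ` L'"
      then have "q - g \<in> L'" using yz L'(1) by (auto simp: subspace_diff algebra_simps)
      then obtain w where "w \<in> L" "q - g = G w" unfolding L'_def by blast
      then have w: "w \<in> L" "q = g + G w" by (simp_all add: algebra_simps)
      have "norm w \<le> norm (w + (G w - w))"
        using norm_le_norm_add_orthogonal_comp[OF w(1) G_perturb[OF w(1)]] .
      also have "\<dots> \<le> r / (card I * R\<^sup>2)" using q w(2) by (simp add: dist_norm)
      finally have nw: "norm w \<le> r / (card I * R\<^sup>2)" .
      have "\<bar>(w \<bullet> u k) / t\<bar> \<le> 1 / card I" if k: "k \<in> I" for k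
      proof -
        have "\<bar>w \<bullet> u k\<bar> \<le> norm w * norm (u k)" by (rule Cauchy_Schwarz_ineq2)
        also have "\<dots> \<le> r / (card I * R\<^sup>2) * R"
          using nw unorm[OF k] r R by (intro mult_mono) auto
        also have "\<dots> = t / card I" using R by (simp add: t_def power2_eq_square)
        finally show ?thesis using t by (simp add: divide_le_eq mult.commute)
      qed
      moreover have "(\<Sum>k\<in>I. (w \<bullet> u k) / t) = 0"
        using usum by (simp add: sum_divide_distrib[symmetric] inner_sum_right[symmetric])
      moreover have "q = (\<Sum>k\<in>I. (1 / card I + (w \<bullet> u k) / t) *\<^sub>R p k)"
        using w(2) by (simp add: g_def G_def scaleR_add_left sum.distrib)
      ultimately show "q \<in> K"
        using convex_perturbed_barycentre_mem[OF K I pK] by simp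
    qed
  qed (use L' yz in auto)
qed

lemma section_ball_of_projection_ball:
  fixes K L :: "'a::euclidean_space set"
  assumes K: "convex K" and L: "subspace L" "dim L = n" "1 \<le> n"
    and "r > 0" "c \<in> L" "cball c r \<inter> L \<subseteq> orth_proj_set K L"
  obtains L' x q where "subspace L'" "dim L' = n" "x \<in> orthogonal_comp L'" "q \<in> (+) x ` L'"
    "cball q (r / n) \<inter> (+) x ` L' \<subseteq> K"
proof -
  obtain I :: "'a option set" and u where I: "finite I" "card I = n + 1"
    and u: "\<And>k. k \<in> I \<Longrightarrow> u k \<in> L" "(\<Sum>k\<in>I. u k) = 0"
      "\<And>w. w \<in> L \<Longrightarrow> (\<Sum>k\<in>I. (w \<bullet> u k) *\<^sub>R u k) = w"
    and u_norm: "\<And>k. k \<in> I \<Longrightarrow> (norm (u k))\<^sup>2 = real n / (real n + 1)"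
    by (rule regular_simplex_tight_frame[OF L]) blast
  define R where "R = sqrt (real n / (real n + 1))"
  have R: "R > 0" "R\<^sup>2 = real n / (real n + 1)" using L(3) by (simp_all add: R_def)
  have u_le: "norm (u k) \<le> R" if "k \<in> I" for k
    using u_norm[OF that] by (simp add: R_def real_le_rsqrt)
  have "I \<noteq> {}" using I(2) by auto
  obtain L' x q where "subspace L'" "dim L' = dim L" "x \<in> orthogonal_comp L'"
    "q \<in> (+) x ` L'" "cball q (r / (card I * R\<^sup>2)) \<inter> (+) x ` L' \<subseteq> K"
    by (rule section_ball_of_projection_ball_frame[OF K L(1) I(1) \<open>I \<noteq> {}\<close> u u_le R(1) assms(5-7)])
  moreover have "card I * R\<^sup>2 = n" using I(2) R(2) by (simp add: field_simps)
  ultimately show thesis using L(2) that by simp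
qed

lemma sect_inradius_nonneg:
  fixes K :: "'a::euclidean_space set"
  assumes K: "convex_body K" and i: "1 \<le> i" "i \<le> DIM('a)"
  shows "0 \<le> sect_inradius i K"
proof -
  obtain M where M: "K \<subseteq> cball 0 M" using convex_body_subset_cball[OF K] .
  obtain k where k: "k \<in> K" using K by (auto simp: convex_body_def)
  obtain L :: "'a set" where L: "subspace L" "dim L = i" using obtain_subspace_dim[OF i(2)] .
  obtain y z where yz: "y \<in> L" "z \<in> orthogonal_comp L" "k = y + z"
    using orthogonal_decomposition_subspace[OF L(1)] by metis
  then have kA: "k \<in> K \<inter> (+) z ` L" using k by (auto simp: add.commute)
  have "0 \<le> inradius_in (K \<inter> (+) z ` L) ((+) z ` L)"
    using kA L i(1) M by (intro inradius_in_ge[of _ M L k z]) auto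
  also have "\<dots> \<le> sect_inradius i K"
    using inradius_in_le_sect_inradius[OF M i(1) L yz(2)] kA by blast
  finally show ?thesis .
qed

lemma proj_inradius_le_sect_inradius:
  fixes K :: "'a::euclidean_space set"
  assumes K: "convex_body K" and i: "1 \<le> i" "i \<le> DIM('a)"
  shows "proj_inradius i K \<le> i * sect_inradius i K"
proof -
  obtain M where M: "K \<subseteq> cball 0 M" using convex_body_subset_cball[OF K] .
  have "K \<noteq> {}" "convex K" using K by (simp_all add: convex_body_def)
  have "inradius_in (orth_proj_set K L) L \<le> i * sect_inradius i K"
    if L: "subspace L" "dim L = i" for L
  proof -
    obtain y where "y \<in> orth_proj_set K L"
      using orth_proj_set_nonempty[OF L(1) \<open>K \<noteq> {}\<close>] by blast
    moreover have "r \<le> i * sect_inradius i K"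
      if r: "0 \<le> r" "c \<in> L" "cball c r \<inter> L \<subseteq> orth_proj_set K L" for r c
    proof (cases "r = 0")
      case True then show ?thesis using sect_inradius_nonneg[OF K i] by simp
    next
      case False
      then obtain L' x q where L': "subspace L'" "dim L' = i" "x \<in> orthogonal_comp L'"
        and q: "q \<in> (+) x ` L'" "cball q (r / i) \<inter> (+) x ` L' \<subseteq> K"
        using section_ball_of_projection_ball[OF \<open>convex K\<close> L i(1) _ r(2,3)] r(1) by auto
      have "q \<in> K \<inter> (+) x ` L'" using q r(1) i(1) by auto
      then have "r / i \<le> inradius_in (K \<inter> (+) x ` L') ((+) x ` L')"
        using q L' M r(1) i(1) by (intro inradius_in_ge[of _ M L' q x]) auto
      also have "\<dots> \<le> sect_inradius i K"
        using inradius_in_le_sect_inradius[OF M i(1) L'] \<open>q \<in> K \<inter> (+) x ` L'\<close> by blast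
      finally show ?thesis using i(1) by (simp add: field_simps)
    qed
    ultimately show ?thesis by (intro inradius_in_le[of y]) (auto simp: orth_proj_set_def)
  qed
  moreover obtain L0 :: "'a set" where "subspace L0" "dim L0 = i"
    using obtain_subspace_dim[OF i(2)] .
  ultimately show ?thesis
    unfolding proj_inradius_def by (intro cSup_least) blast+
qed

lemma sect_inradius_le_proj_inradius:
  fixes K :: "'a::euclidean_space set"
  assumes K: "convex_body K" and i: "1 \<le> i" "i \<le> DIM('a)"
  shows "sect_inradius i K \<le> proj_inradius i K"
proof -
  obtain M where M: "K \<subseteq> cball 0 M" using convex_body_subset_cball[OF K] .
  have "K \<noteq> {}" using K by (simp add: convex_body_def)
  have "inradius_in (K \<inter> (+) x ` L) ((+) x ` L) \<le> proj_inradius i K"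
    if L: "subspace L" "dim L = i" and x: "x \<in> orthogonal_comp L" and ne: "K \<inter> (+) x ` L \<noteq> {}"
    for L x
  proof -
    have "r \<le> inradius_in (orth_proj_set K L) L"
      if r: "0 \<le> r" "q \<in> (+) x ` L" "cball q r \<inter> (+) x ` L \<subseteq> K \<inter> (+) x ` L" for r q
    proof -
      obtain l where l: "l \<in> L" "q = x + l" using r(2) by blast
      have "cball l r \<inter> L \<subseteq> orth_proj_set K L"
      proof
        fix y assume y: "y \<in> cball l r \<inter> L"
        then have "x + y \<in> K" using r(3) l by (auto simp: dist_norm)
        then show "y \<in> orth_proj_set K L" using x y by (intro orth_proj_set_memI) auto
      qed
      then have "r \<le> inradius_in (orth_proj_set K L) ((+) 0 ` L)"
        using orth_proj_set_subset_cball[OF M] L i(1) r(1) l(1)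
        by (intro inradius_in_ge[of _ M L l 0]) auto
      then show ?thesis by simp
    qed
    moreover obtain x0 where "x0 \<in> (K \<inter> (+) x ` L) \<inter> (+) x ` L" using ne by blast
    ultimately have "inradius_in (K \<inter> (+) x ` L) ((+) x ` L) \<le> inradius_in (orth_proj_set K L) L"
      by (intro inradius_in_le[of x0]) auto
    also have "\<dots> \<le> proj_inradius i K"
      using inradius_in_le_proj_inradius[OF M \<open>K \<noteq> {}\<close> i(1) L] .
    finally show ?thesis .
  qed
  moreover obtain L0 :: "'a set" where L0: "subspace L0" "dim L0 = i"
    using obtain_subspace_dim[OF i(2)] .
  moreover obtain k where k: "k \<in> K" using \<open>K \<noteq> {}\<close> by blast
  moreover obtain y z where "y \<in> L0" "z \<in> orthogonal_comp L0" "k = y + z"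
    using orthogonal_decomposition_subspace[OF L0(1)] by metis
  moreover have "k \<in> K \<inter> (+) z ` L0"
    using k \<open>y \<in> L0\<close> \<open>k = y + z\<close> by (simp add: image_iff add.commute)
  ultimately show ?thesis
    unfolding sect_inradius_def by (intro cSup_least) blast+
qed

theorem corollary4p3:
  fixes K :: "'a::euclidean_space set" and i :: nat
  assumes "convex_body K" and "1 \<le> i" and "i \<le> DIM('a)"
  shows "proj_inradius i K \<le> real i * sect_inradius i K \<and>
         (\<exists>K' :: 'a set. convex_body K' \<and> sect_inradius 1 K' > 0 \<and>
           proj_inradius 1 K' = real 1 * sect_inradius 1 K')"
proof
  show "proj_inradius i K \<le> real i * sect_inradius i K"
    using proj_inradius_le_sect_inradius[OF assms] .
  define B :: "'a set" where "B = cball 0 1"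
  have B: "convex_body B" by (simp add: B_def convex_body_def)
  have d: "1 \<le> DIM('a)" by (simp add: DIM_positive Suc_le_eq)
  obtain L :: "'a set" where L: "subspace L" "dim L = 1" using obtain_subspace_dim[OF d] .
  have B1: "B \<subseteq> cball 0 1" by (simp add: B_def)
  have "0 \<in> B \<inter> (+) 0 ` L" using subspace_0[OF L(1)] by (simp add: B_def)
  have "1 \<le> inradius_in (B \<inter> (+) 0 ` L) ((+) 0 ` L)"
    using B1 L \<open>0 \<in> B \<inter> (+) 0 ` L\<close>
    by (intro inradius_in_ge[of "B \<inter> (+) 0 ` L" 1 L 0 0]) (auto simp: B_def)
  also have "\<dots> \<le> sect_inradius 1 B"
    using \<open>0 \<in> B \<inter> (+) 0 ` L\<close>
    by (intro inradius_in_le_sect_inradius[OF B1 order.refl L subspace_0[OF subspace_orthogonal_comp]])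
      blast
  finally have "sect_inradius 1 B > 0" by simp
  moreover have "proj_inradius 1 B = real 1 * sect_inradius 1 B"
    using proj_inradius_le_sect_inradius[OF B order.refl d] sect_inradius_le_proj_inradius[OF B order.refl d]
    by simp
  ultimately show "\<exists>K' :: 'a set. convex_body K' \<and> sect_inradius 1 K' > 0 \<and>
      proj_inradius 1 K' = real 1 * sect_inradius 1 K'"
    using B by blast
qed

end
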